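(* (i) The variety of idempotent semirings satisfying $x+xyx\approx x$ equals $\mathbf{Rect}^{\bullet}\circ(\mathbf{LZ}^{+}\circ\mathbf{D})$. (ii) The variety of idempotent semirings satisfying $xyx+x\approx x$ equals $\mathbf{Rect}^{\bullet}\circ(\mathbf{RZ}^{+}\circ\mathbf{D})$.
   Context: An idempotent semiring is an algebra $(S,+,\cdot)$ with $(S,+)$, $(S,\cdot)$ bands and both distributive laws; addition not assumed commutative. $\mathbf{Rect}^{\bullet}$ is the variety of idempotent semirings satisfying $xyx\approx x$. $\mathbf{D}$ is the variety of distributive lattices (idempotent semirings satisfying $x+y\approx y+x$, $xy\approx yx$, $x+xy\approx x$); $\mathbf{LZ}^{+}$ (resp. $\mathbf{RZ}^{+}$) is the variety of idempotent semirings satisfying $x+y\approx x$ (resp. $x+y\approx y$). For classes $\mathbf{V},\mathbf{W}$ of idempotent semirings, the Mal'cev product $\mathbf{V}\circ\mathbf{W}$ is the class of idempotent semirings $S$ admitting a congruence $\rho$ with $S/\rho\in\mathbf{W}$ and every $\rho$-class (a subsemiring) belonging to $\mathbf{V}$. *)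

theory Defs
  imports Main
begin

record 'a salg =
  car :: "'a set"
  pl  :: "'a \<Rightarrow> 'a \<Rightarrow> 'a"
  tm  :: "'a \<Rightarrow> 'a \<Rightarrow> 'a"

definition idem_semiring :: "('a, 'b) salg_scheme \<Rightarrow> bool" where
  "idem_semiring A \<longleftrightarrow>
     (\<forall>x\<in>car A. \<forall>y\<in>car A. pl A x y \<in> car A \<and> tm A x y \<in> car A) \<and>
     (\<forall>x\<in>car A. \<forall>y\<in>car A. \<forall>z\<in>car A.
        pl A (pl A x y) z = pl A x (pl A y z) \<and>
        tm A (tm A x y) z = tm A x (tm A y z) \<and>
        tm A x (pl A y z) = pl A (tm A x y) (tm A x z) \<and>
        tm A (pl A x y) z = pl A (tm A x z) (tm A y z)) \<and>
     (\<forall>x\<in>car A. pl A x x = x \<and> tm A x x = x)"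

definition congruence :: "('a, 'b) salg_scheme \<Rightarrow> 'a rel \<Rightarrow> bool" where
  "congruence A \<rho> \<longleftrightarrow> equiv (car A) \<rho> \<and>
     (\<forall>x x' y y'. (x, x') \<in> \<rho> \<longrightarrow> (y, y') \<in> \<rho> \<longrightarrow>
        (pl A x y, pl A x' y') \<in> \<rho> \<and> (tm A x y, tm A x' y') \<in> \<rho>)"

definition quot :: "('a, 'b) salg_scheme \<Rightarrow> 'a rel \<Rightarrow> 'a set salg" where
  "quot A \<rho> = \<lparr> car = car A // \<rho>,
      pl = (\<lambda>X Y. \<rho> `` {pl A (SOME x. x \<in> X) (SOME y. y \<in> Y)}),
      tm = (\<lambda>X Y. \<rho> `` {tm A (SOME x. x \<in> X) (SOME y. y \<in> Y)}) \<rparr>"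

definition restr :: "('a, 'b) salg_scheme \<Rightarrow> 'a set \<Rightarrow> 'a salg" where
  "restr A C = \<lparr> car = C, pl = pl A, tm = tm A \<rparr>"

definition malcev :: "('a salg \<Rightarrow> bool) \<Rightarrow> ('a set salg \<Rightarrow> bool) \<Rightarrow> 'a salg \<Rightarrow> bool" where
  "malcev V W A \<longleftrightarrow> idem_semiring A \<and>
     (\<exists>\<rho>. congruence A \<rho> \<and> W (quot A \<rho>) \<and> (\<forall>C \<in> car A // \<rho>. V (restr A C)))"

definition Rect :: "'a salg \<Rightarrow> bool" where
  "Rect A \<longleftrightarrow> idem_semiring A \<and> (\<forall>x\<in>car A. \<forall>y\<in>car A. tm A (tm A x y) x = x)"

definition DLat :: "'a salg \<Rightarrow> bool" where
  "DLat A \<longleftrightarrow> idem_semiring A \<and>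
     (\<forall>x\<in>car A. \<forall>y\<in>car A. pl A x y = pl A y x \<and> tm A x y = tm A y x \<and>
        pl A x (tm A x y) = x)"

definition LZplus :: "'a salg \<Rightarrow> bool" where
  "LZplus A \<longleftrightarrow> idem_semiring A \<and> (\<forall>x\<in>car A. \<forall>y\<in>car A. pl A x y = x)"

definition RZplus :: "'a salg \<Rightarrow> bool" where
  "RZplus A \<longleftrightarrow> idem_semiring A \<and> (\<forall>x\<in>car A. \<forall>y\<in>car A. pl A x y = y)"

end

theory Submission
  imports Defs
begin

text \<open>
  The multiplicative reduct of an idempotent semiring is a band, and in a band Green's relation
  D (x D y iff xyx = x and yxy = y) is a congruence with rectangular classes and a semilattice
  quotient. Under x + xyx = x the preorder x \<preceq> y iff xyx = x is preserved by c + _, and D is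
  preserved by _ + c, so D is a semiring congruence. Its quotient has commutative multiplication
  and satisfies x + xy = x, and such a semiring lies in LZ+ o D via Green's relation L of its
  additive reduct. Conversely, in Rect o (LZ+ o D) the element x + xyx is congruent to x, hence
  lies in the rectangular class of x, and x(x + xyx)x = x + xyx forces x + xyx = x.
  Part (ii) follows by reversing the order of addition.
\<close>

section \<open>Bands and the J-preorder\<close>

locale band =
  fixes S :: "'a set" and mult :: "'a \<Rightarrow> 'a \<Rightarrow> 'a" (infixl "\<cdot>" 70)
  assumes mult_closed [simp]: "x \<in> S \<Longrightarrow> y \<in> S \<Longrightarrow> x \<cdot> y \<in> S"
    and mult_assoc [simp]: "x \<in> S \<Longrightarrow> y \<in> S \<Longrightarrow> z \<in> S \<Longrightarrow> x \<cdot> y \<cdot> z = x \<cdot> (y \<cdot> z)"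
    and mult_idem [simp]: "x \<in> S \<Longrightarrow> x \<cdot> x = x"
begin

lemma mult_idem_left [simp]: "x \<in> S \<Longrightarrow> y \<in> S \<Longrightarrow> x \<cdot> (x \<cdot> y) = x \<cdot> y"
  by (metis mult_assoc mult_idem)

lemma mult_square [simp]: "x \<in> S \<Longrightarrow> y \<in> S \<Longrightarrow> x \<cdot> (y \<cdot> (x \<cdot> y)) = x \<cdot> y"
  by (metis mult_assoc mult_closed mult_idem)

lemma mult_square_left [simp]:
  "x \<in> S \<Longrightarrow> y \<in> S \<Longrightarrow> z \<in> S \<Longrightarrow> x \<cdot> (y \<cdot> (x \<cdot> (y \<cdot> z))) = x \<cdot> (y \<cdot> z)"
  by (metis mult_assoc mult_closed mult_square)

lemma band_mult_reversed: "band S (\<lambda>x y. y \<cdot> x)"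
  by unfold_locales auto

definition below :: "'a \<Rightarrow> 'a \<Rightarrow> bool" (infix "\<preceq>" 50) where
  "x \<preceq> y \<longleftrightarrow> x \<cdot> y \<cdot> x = x"

lemma below_mult_reversed: "x \<in> S \<Longrightarrow> y \<in> S \<Longrightarrow> band.below (\<lambda>x y. y \<cdot> x) x y \<longleftrightarrow> x \<preceq> y"
  by (simp add: band.below_def[OF band_mult_reversed] below_def)

lemma below_refl: "x \<in> S \<Longrightarrow> x \<preceq> x"
  by (simp add: below_def)

lemma mult_below_middle:
  assumes S: "u \<in> S" "v \<in> S" "w \<in> S"
  shows "u \<cdot> v \<cdot> w \<preceq> v"
proof -
  define p where "p = u \<cdot> v \<cdot> w \<cdot> v"
  have pS: "p \<in> S" using S by (simp add: p_def)
  have pw: "p \<cdot> w = u \<cdot> v \<cdot> w" using S by (simp add: p_def)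
  have "u \<cdot> v \<cdot> w \<cdot> v \<cdot> (u \<cdot> v \<cdot> w) = p \<cdot> (p \<cdot> w)" using S by (simp add: p_def)
  also have "\<dots> = p \<cdot> w" using S pS by simp
  finally show ?thesis by (simp add: below_def pw)
qed

lemma below_mult_right:
  assumes S: "x \<in> S" "y \<in> S" "c \<in> S" and "x \<preceq> c"
  shows "x \<cdot> y \<preceq> c"
proof -
  have "x \<cdot> y = x \<cdot> c \<cdot> (x \<cdot> y)"
    using assms by (metis below_def mult_assoc mult_closed)
  then show ?thesis using mult_below_middle[of x c "x \<cdot> y"] S by simp
qed

lemma below_mult_left:
  assumes "x \<in> S" "y \<in> S" "c \<in> S" and "x \<preceq> c"
  shows "y \<cdot> x \<preceq> c"
  using band.below_mult_right[OF band_mult_reversed] assms by (simp add: below_mult_reversed)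

lemma below_trans:
  assumes S: "a \<in> S" "b \<in> S" "c \<in> S" and "a \<preceq> b" "b \<preceq> c"
  shows "a \<preceq> c"
proof -
  have "a \<cdot> b \<cdot> a \<preceq> c"
    using assms by (simp add: below_mult_left below_mult_right)
  then show ?thesis using \<open>a \<preceq> b\<close> by (simp add: below_def)
qed

lemma below_mult:
  assumes S: "p \<in> S" "y \<in> S" "c \<in> S" and py: "p \<preceq> y" and pc: "p \<preceq> c"
  shows "p \<preceq> y \<cdot> c"
proof -
  have pyp: "p \<cdot> y \<cdot> p = p" using py by (simp add: below_def)
  have "p \<cdot> y \<preceq> c" using S pc by (rule below_mult_right)
  then have pyc: "p \<cdot> y \<cdot> c \<cdot> (p \<cdot> y) = p \<cdot> y" by (simp add: below_def)
  have "p \<cdot> (y \<cdot> c) \<cdot> p = p \<cdot> (y \<cdot> c) \<cdot> (p \<cdot> y \<cdot> p)" by (simp only: pyp)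
  also have "\<dots> = p \<cdot> y \<cdot> c \<cdot> (p \<cdot> y) \<cdot> p" using S by simp
  also have "\<dots> = p" using S by (simp only: pyc pyp)
  finally show ?thesis by (simp add: below_def)
qed

lemma below_mult_mono:
  assumes S: "a \<in> S" "b \<in> S" "c \<in> S" and ab: "a \<preceq> b"
  shows "a \<cdot> c \<preceq> b \<cdot> c" and "c \<cdot> a \<preceq> c \<cdot> b"
proof -
  have "a \<cdot> c \<preceq> c" using mult_below_middle[of a c c] S by simp
  with S ab show "a \<cdot> c \<preceq> b \<cdot> c" by (simp add: below_mult below_mult_right)
  have "c \<cdot> a \<preceq> c" using mult_below_middle[of c c a] S by simp
  with S ab show "c \<cdot> a \<preceq> c \<cdot> b"
    using band.below_mult[OF band_mult_reversed, of "c \<cdot> a" b c] by (simp add: below_mult_reversed below_mult_left)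
qed

text \<open>Green's relation D of the band, which for bands coincides with J.\<close>

definition green_D :: "'a rel" where
  "green_D = {(x, y). x \<in> S \<and> y \<in> S \<and> x \<preceq> y \<and> y \<preceq> x}"

lemma equiv_green_D: "equiv S green_D"
proof (rule equivI)
  show "trans green_D"
    by (rule transI) (auto simp: green_D_def dest: below_trans[rotated 3])
qed (auto simp: green_D_def refl_on_def sym_def below_refl)

lemma green_D_mult:
  assumes "(x, x') \<in> green_D" "(y, y') \<in> green_D"
  shows "(x \<cdot> y, x' \<cdot> y') \<in> green_D"
proof -
  have "(x \<cdot> y, x' \<cdot> y) \<in> green_D" "(x' \<cdot> y, x' \<cdot> y') \<in> green_D"
    using assms by (auto simp: green_D_def below_mult_mono)
  then show ?thesis using equiv_green_D by (meson equivE transD)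
qed

lemma green_D_mult_comm: "x \<in> S \<Longrightarrow> y \<in> S \<Longrightarrow> (x \<cdot> y, y \<cdot> x) \<in> green_D"
  by (simp add: green_D_def below_def)

end

section \<open>Idempotent semirings satisfying x + xyx = x\<close>

locale idem_semiring_on = band +
  fixes plus :: "'a \<Rightarrow> 'a \<Rightarrow> 'a" (infixl "\<oplus>" 65)
  assumes plus_closed [simp]: "x \<in> S \<Longrightarrow> y \<in> S \<Longrightarrow> x \<oplus> y \<in> S"
    and plus_assoc [simp]: "x \<in> S \<Longrightarrow> y \<in> S \<Longrightarrow> z \<in> S \<Longrightarrow> x \<oplus> y \<oplus> z = x \<oplus> (y \<oplus> z)"
    and plus_idem [simp]: "x \<in> S \<Longrightarrow> x \<oplus> x = x"
    and distrib_left [simp]: "x \<in> S \<Longrightarrow> y \<in> S \<Longrightarrow> z \<in> S \<Longrightarrow> x \<cdot> (y \<oplus> z) = x \<cdot> y \<oplus> x \<cdot> z"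
    and distrib_right [simp]: "x \<in> S \<Longrightarrow> y \<in> S \<Longrightarrow> z \<in> S \<Longrightarrow> (x \<oplus> y) \<cdot> z = x \<cdot> z \<oplus> y \<cdot> z"
begin

lemma plus_idem_left [simp]: "x \<in> S \<Longrightarrow> y \<in> S \<Longrightarrow> x \<oplus> (x \<oplus> y) = x \<oplus> y"
  by (metis plus_assoc plus_idem)

lemma mult_reversed_semiring: "idem_semiring_on S (\<lambda>x y. y \<cdot> x) (\<oplus>)"
  by (rule idem_semiring_on.intro[OF band_mult_reversed]) (unfold_locales, auto)

lemma plus_reversed_semiring: "idem_semiring_on S (\<cdot>) (\<lambda>x y. y \<oplus> x)"
  by (rule idem_semiring_on.intro[OF band_axioms]) (unfold_locales, auto)

lemma plus_square: "x \<in> S \<Longrightarrow> y \<in> S \<Longrightarrow> x \<oplus> y = x \<oplus> x \<cdot> y \<oplus> y \<cdot> x \<oplus> y"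
  using distrib_right[of x y "x \<oplus> y"] by simp

lemma plus_square': "x \<in> S \<Longrightarrow> y \<in> S \<Longrightarrow> x \<oplus> y = x \<oplus> y \<cdot> x \<oplus> x \<cdot> y \<oplus> y"
  using distrib_left[of "x \<oplus> y" x y] by simp

end

locale xyx_absorbing = idem_semiring_on +
  assumes absorb: "x \<in> S \<Longrightarrow> y \<in> S \<Longrightarrow> x \<oplus> x \<cdot> y \<cdot> x = x"
begin

lemma absorb': "x \<in> S \<Longrightarrow> y \<in> S \<Longrightarrow> x \<oplus> x \<cdot> (y \<cdot> x) = x"
  using absorb by simp

lemma mult_reversed_absorbing: "xyx_absorbing S (\<lambda>x y. y \<cdot> x) (\<oplus>)"
  by (rule xyx_absorbing.intro[OF mult_reversed_semiring]) (simp add: xyx_absorbing_axioms_def absorb')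

lemma mult_plus_absorb:
  assumes S: "x \<in> S" "y \<in> S" "z \<in> S"
  shows "x \<cdot> z \<oplus> x \<cdot> y \<cdot> z = x \<cdot> z"
proof -
  have inner: "x \<cdot> z \<cdot> (x \<oplus> w) \<cdot> z = x \<cdot> z" if "w \<in> S" for w
  proof -
    have "x \<cdot> z \<cdot> (x \<oplus> w) \<cdot> z = x \<cdot> (z \<oplus> z \<cdot> w \<cdot> z)" using S that by simp
    also have "\<dots> = x \<cdot> z" using S that by (simp only: absorb)
    finally show ?thesis .
  qed
  have "x \<cdot> z \<cdot> x \<cdot> (z \<oplus> y) \<cdot> z = x \<cdot> z \<cdot> (x \<oplus> x \<cdot> y) \<cdot> z" using S by simp
  also have "\<dots> = x \<cdot> z" using S by (simp only: inner mult_closed)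
  finally have xzx: "x \<cdot> z \<cdot> x \<cdot> (z \<oplus> y) \<cdot> z = x \<cdot> z" .
  have "z \<cdot> x \<cdot> (z \<oplus> y) \<cdot> z = z \<cdot> (x \<cdot> z \<cdot> x \<cdot> (z \<oplus> y) \<cdot> z)" using S by simp
  also have "\<dots> = z \<cdot> x \<cdot> z" using S by (simp only: xzx) simp
  finally have zx: "z \<cdot> x \<cdot> (z \<oplus> y) \<cdot> z = z \<cdot> x \<cdot> z" .
  have "x \<cdot> (z \<oplus> y) \<cdot> z \<cdot> (x \<cdot> z) = (x \<oplus> x \<cdot> (y \<cdot> z) \<cdot> x) \<cdot> z" using S by simp
  also have "\<dots> = x \<cdot> z" using S by (simp only: absorb mult_closed)
  finally have xz: "x \<cdot> (z \<oplus> y) \<cdot> z \<cdot> (x \<cdot> z) = x \<cdot> z" .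
  txt \<open>m equals xz + xyz; rewriting its square with zx and then xz collapses it to xz.\<close>
  define m where "m = x \<cdot> (z \<oplus> y) \<cdot> z"
  have mS: "m \<in> S" using S by (simp add: m_def)
  have "x \<cdot> z \<oplus> x \<cdot> y \<cdot> z = m" using S by (simp add: m_def)
  also have "\<dots> = m \<cdot> m" using mS by simp
  also have "\<dots> = x \<cdot> (z \<oplus> y) \<cdot> (z \<cdot> x \<cdot> (z \<oplus> y) \<cdot> z)"
    unfolding m_def using S by (simp only: mult_assoc mult_closed plus_closed)
  also have "\<dots> = x \<cdot> (z \<oplus> y) \<cdot> z \<cdot> (x \<cdot> z)" using S by (simp only: zx) simp
  also have "\<dots> = x \<cdot> z" by (rule xz)
  finally show ?thesis .
qed

lemma plus_cancel_below:
  assumes S: "a \<in> S" "b \<in> S" "c \<in> S" and "a \<preceq> b"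
  shows "a \<oplus> c \<cdot> b \<cdot> a = a \<oplus> c \<cdot> a"
proof -
  have aba: "a \<cdot> b \<cdot> a = a" using \<open>a \<preceq> b\<close> by (simp add: below_def)
  have ac: "(a \<oplus> c) \<cdot> (b \<cdot> a) = a \<oplus> c \<cdot> b \<cdot> a" using S aba by simp
  have "a \<oplus> c \<cdot> b \<cdot> a = (a \<oplus> c) \<cdot> ((a \<oplus> c) \<cdot> (b \<cdot> a))"
    using S by (simp only: ac[symmetric] mult_idem_left plus_closed mult_closed)
  also have "\<dots> = (a \<oplus> c) \<cdot> a \<oplus> (a \<oplus> c) \<cdot> (c \<cdot> b) \<cdot> a"
    using S by (simp only: ac distrib_left mult_assoc mult_closed plus_closed)
  also have "\<dots> = (a \<oplus> c) \<cdot> a" using S by (intro mult_plus_absorb) simp_all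
  also have "\<dots> = a \<oplus> c \<cdot> a" using S by simp
  finally show ?thesis .
qed

lemma plus_cancel_below':
  assumes "a \<in> S" "b \<in> S" "c \<in> S" and "a \<preceq> b"
  shows "a \<oplus> a \<cdot> b \<cdot> c = a \<oplus> a \<cdot> c"
  using xyx_absorbing.plus_cancel_below[OF mult_reversed_absorbing] assms
  by (simp add: below_mult_reversed)

lemma plus_expand:
  assumes S: "x \<in> S" "w \<in> S"
  shows "x \<oplus> w = x \<oplus> x \<cdot> w \<oplus> w \<cdot> x \<oplus> w \<cdot> x \<cdot> w \<oplus> w"
proof -
  have "w \<cdot> x \<oplus> w = w \<cdot> x \<oplus> w \<cdot> x \<cdot> w \<oplus> w"
    using plus_square'[of "w \<cdot> x" w] S by simp
  then show ?thesis using plus_square[of x w] S by simp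
qed

lemma plus_mult_below:
  assumes S: "x \<in> S" "y \<in> S" "z \<in> S"
  shows "x \<oplus> y \<cdot> z \<preceq> x \<oplus> y" and "x \<oplus> z \<cdot> y \<preceq> x \<oplus> y"
proof -
  have expand: "(x \<oplus> w) \<cdot> (x \<oplus> y) \<cdot> (x \<oplus> w)
      = x \<cdot> ((x \<oplus> y) \<cdot> (x \<oplus> w)) \<oplus> w \<cdot> ((x \<oplus> y) \<cdot> (x \<oplus> w))" if "w \<in> S" for w
  proof -
    have "(x \<oplus> w) \<cdot> (x \<oplus> y) \<cdot> (x \<oplus> w) = (x \<oplus> w) \<cdot> ((x \<oplus> y) \<cdot> (x \<oplus> w))"
      using S that by simp
    also have "\<dots> = x \<cdot> ((x \<oplus> y) \<cdot> (x \<oplus> w)) \<oplus> w \<cdot> ((x \<oplus> y) \<cdot> (x \<oplus> w))"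
      using S that by (intro distrib_right) simp_all
    finally show ?thesis .
  qed
  txt \<open>Both products reduce, by absorption, to the five-term form of x + w from plus_expand.\<close>
  have "(x \<oplus> y \<cdot> z) \<cdot> (x \<oplus> y) \<cdot> (x \<oplus> y \<cdot> z)
      = (x \<oplus> x \<cdot> y \<cdot> x) \<oplus> x \<cdot> (y \<cdot> z) \<oplus> (y \<cdot> z \<cdot> x \<oplus> y \<cdot> z \<cdot> y \<cdot> x)
        \<oplus> y \<cdot> z \<cdot> x \<cdot> (y \<cdot> z) \<oplus> y \<cdot> z"
    using S by (subst expand) simp_all
  also have "\<dots> = x \<oplus> y \<cdot> z"
    using S by (simp only: absorb mult_plus_absorb mult_closed plus_expand[symmetric])
  finally show "x \<oplus> y \<cdot> z \<preceq> x \<oplus> y" by (simp add: below_def)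
  have "(x \<oplus> z \<cdot> y) \<cdot> (x \<oplus> y) \<cdot> (x \<oplus> z \<cdot> y)
      = (x \<oplus> x \<cdot> y \<cdot> x) \<oplus> (x \<cdot> (z \<cdot> y) \<oplus> x \<cdot> y \<cdot> (z \<cdot> y))
        \<oplus> z \<cdot> y \<cdot> x \<oplus> z \<cdot> y \<cdot> x \<cdot> (z \<cdot> y) \<oplus> z \<cdot> y"
    using S by (subst expand) simp_all
  also have "\<dots> = x \<oplus> z \<cdot> y"
    using S by (simp only: absorb mult_plus_absorb mult_closed plus_expand[symmetric])
  finally show "x \<oplus> z \<cdot> y \<preceq> x \<oplus> y" by (simp add: below_def)
qed

lemma below_plus_left:
  assumes S: "a \<in> S" "b \<in> S" "c \<in> S" and "a \<preceq> b"
  shows "c \<oplus> a \<preceq> c \<oplus> b"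
proof -
  have "c \<oplus> a = c \<oplus> a \<cdot> (b \<cdot> a)" using \<open>a \<preceq> b\<close> S by (simp add: below_def)
  also have "\<dots> \<preceq> c \<oplus> b \<cdot> a" using S by (simp add: plus_mult_below)
  finally have "c \<oplus> a \<preceq> c \<oplus> b \<cdot> a" .
  moreover have "c \<oplus> b \<cdot> a \<preceq> c \<oplus> b" using S by (simp add: plus_mult_below)
  ultimately show ?thesis using S by (meson below_trans mult_closed plus_closed)
qed

lemma below_plus_right:
  assumes S: "a \<in> S" "b \<in> S" "c \<in> S" and ab: "a \<preceq> b" and ba: "b \<preceq> a"
  shows "a \<oplus> c \<preceq> b \<oplus> c"
proof -
  define s where "s = a \<oplus> c"
  have sS: "s \<in> S" using S by (simp add: s_def)
  have aba: "a \<cdot> (b \<cdot> a) = a" using ab S by (simp add: below_def)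
  have bab: "b \<cdot> a \<cdot> b = b" using ba by (simp add: below_def)
  have sba: "s \<cdot> b \<cdot> a = s \<cdot> a"
    using plus_cancel_below[OF S ab] S aba by (simp add: s_def)
  have abs: "a \<cdot> b \<cdot> s = a \<cdot> s"
    using plus_cancel_below'[OF S ab] S aba by (simp add: s_def)
  have "s \<cdot> b \<cdot> s = s \<cdot> (b \<cdot> a \<cdot> b) \<cdot> s" by (simp only: bab)
  also have "\<dots> = s \<cdot> b \<cdot> a \<cdot> (b \<cdot> s)" using S sS by simp
  also have "\<dots> = s \<cdot> (a \<cdot> b \<cdot> s)" using S sS by (simp add: sba)
  also have "\<dots> = s \<cdot> a \<cdot> s" using S sS by (simp add: abs)
  finally have sbs: "s \<cdot> b \<cdot> s = s \<cdot> a \<cdot> s" .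
  have "s \<cdot> (b \<oplus> c) \<cdot> s = s \<cdot> b \<cdot> s \<oplus> s \<cdot> c \<cdot> s" using S sS by simp
  also have "\<dots> = s \<cdot> (a \<oplus> c) \<cdot> s" using S sS by (simp add: sbs)
  also have "\<dots> = s" using sS by (simp add: s_def)
  finally show ?thesis by (simp add: below_def s_def)
qed

lemma green_D_plus:
  assumes "(x, x') \<in> green_D" "(y, y') \<in> green_D"
  shows "(x \<oplus> y, x' \<oplus> y') \<in> green_D"
proof -
  have "(x \<oplus> y, x' \<oplus> y) \<in> green_D" "(x' \<oplus> y, x' \<oplus> y') \<in> green_D"
    using assms by (auto simp: green_D_def below_plus_left below_plus_right)
  then show ?thesis using equiv_green_D by (meson equivE transD)
qed

lemma green_D_plus_absorb: "x \<in> S \<Longrightarrow> y \<in> S \<Longrightarrow> (x \<oplus> x \<cdot> y, x) \<in> green_D"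
  by (simp add: green_D_def below_def absorb')

end

locale mult_comm_absorbing = idem_semiring_on +
  assumes mult_comm: "x \<in> S \<Longrightarrow> y \<in> S \<Longrightarrow> x \<cdot> y = y \<cdot> x"
    and plus_mult_absorb: "x \<in> S \<Longrightarrow> y \<in> S \<Longrightarrow> x \<oplus> x \<cdot> y = x"
begin

lemma plus_left_regular: "x \<in> S \<Longrightarrow> y \<in> S \<Longrightarrow> x \<oplus> (y \<oplus> x) = x \<oplus> y"
  by (metis distrib_right mult_comm mult_idem plus_assoc plus_closed plus_mult_absorb)

definition plus_L :: "'a rel" where
  "plus_L = {(x, y). x \<in> S \<and> y \<in> S \<and> x \<oplus> y = x \<and> y \<oplus> x = y}"

lemma equiv_plus_L: "equiv S plus_L"
proof (rule equivI)
  show "trans plus_L"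
    by (rule transI) (auto simp: plus_L_def, metis plus_assoc, metis plus_assoc)
qed (auto simp: plus_L_def refl_on_def sym_def)

lemma plus_absorb_sum:
  assumes S: "x \<in> S" "x' \<in> S" "y \<in> S" "y' \<in> S" and "x \<oplus> x' = x" "y \<oplus> y' = y"
  shows "x \<oplus> y \<oplus> (x' \<oplus> y') = x \<oplus> y"
proof -
  have "x \<oplus> y \<oplus> (x' \<oplus> y') = x \<oplus> (y \<oplus> x) \<oplus> x' \<oplus> y'" using S by (simp add: plus_left_regular)
  also have "\<dots> = x \<oplus> (y \<oplus> (x \<oplus> x')) \<oplus> y'" using S by simp
  also have "\<dots> = x \<oplus> (y \<oplus> y')" using S assms by (simp add: plus_left_regular)
  finally show ?thesis using assms by simp
qed

lemma plus_L_plus: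
  assumes "(x, x') \<in> plus_L" "(y, y') \<in> plus_L"
  shows "(x \<oplus> y, x' \<oplus> y') \<in> plus_L"
  using assms plus_absorb_sum[of x x' y y'] plus_absorb_sum[of x' x y' y]
  by (simp add: plus_L_def)

lemma plus_L_mult:
  assumes "(x, x') \<in> plus_L" "(y, y') \<in> plus_L"
  shows "(x \<cdot> y, x' \<cdot> y') \<in> plus_L"
proof -
  have "(x \<cdot> z, x' \<cdot> z) \<in> plus_L" "(z \<cdot> x, z \<cdot> x') \<in> plus_L"
    if "(x, x') \<in> plus_L" "z \<in> S" for x x' z
    using that distrib_left[of z x x'] distrib_left[of z x' x]
      distrib_right[of x x' z] distrib_right[of x' x z]
    by (auto simp: plus_L_def simp del: distrib_left distrib_right)
  then have "(x \<cdot> y, x' \<cdot> y) \<in> plus_L" "(x' \<cdot> y, x' \<cdot> y') \<in> plus_L"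
    using assms by (auto simp: plus_L_def)
  then show ?thesis using equiv_plus_L by (meson equivE transD)
qed

lemma plus_L_plus_comm: "x \<in> S \<Longrightarrow> y \<in> S \<Longrightarrow> (x \<oplus> y, y \<oplus> x) \<in> plus_L"
  by (simp add: plus_L_def plus_left_regular)

end

section \<open>Quotients and Mal'cev products\<close>

lemma idem_semiring_iff_on: "idem_semiring A \<longleftrightarrow> idem_semiring_on (car A) (tm A) (pl A)"
  unfolding idem_semiring_def idem_semiring_on_def idem_semiring_on_axioms_def band_def
  by (intro iffI conjI allI impI ballI; elim conjE; simp)

lemma congruence_equiv: "congruence A \<rho> \<Longrightarrow> equiv (car A) \<rho>"
  by (simp add: congruence_def)

lemma some_in_class:
  assumes "equiv (car A) \<rho>" "a \<in> car A"
  shows "(a, SOME x. x \<in> \<rho> `` {a}) \<in> \<rho>"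
proof -
  have "(SOME x. x \<in> \<rho> `` {a}) \<in> \<rho> `` {a}" using equiv_class_self[OF assms] by (rule someI)
  then show ?thesis by simp
qed

text \<open>quot picks class representatives with SOME; the congruence makes the choice irrelevant.\<close>

lemma quot_ops:
  assumes c: "congruence A \<rho>" and "a \<in> car A" "b \<in> car A"
  shows "pl (quot A \<rho>) (\<rho> `` {a}) (\<rho> `` {b}) = \<rho> `` {pl A a b}"
    and "tm (quot A \<rho>) (\<rho> `` {a}) (\<rho> `` {b}) = \<rho> `` {tm A a b}"
proof -
  have e: "equiv (car A) \<rho>" using c by (rule congruence_equiv)
  let ?a = "SOME x. x \<in> \<rho> `` {a}" and ?b = "SOME x. x \<in> \<rho> `` {b}"
  have "(a, ?a) \<in> \<rho>" "(b, ?b) \<in> \<rho>" using some_in_class[OF e] assms by blast+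
  then have "(pl A a b, pl A ?a ?b) \<in> \<rho>" "(tm A a b, tm A ?a ?b) \<in> \<rho>"
    using c by (simp_all add: congruence_def)
  then show "pl (quot A \<rho>) (\<rho> `` {a}) (\<rho> `` {b}) = \<rho> `` {pl A a b}"
    and "tm (quot A \<rho>) (\<rho> `` {a}) (\<rho> `` {b}) = \<rho> `` {tm A a b}"
    using equiv_class_eq[OF e] by (simp_all add: quot_def)
qed

lemma quot_car [simp]: "car (quot A \<rho>) = car A // \<rho>"
  by (simp add: quot_def)

lemma quot_ball: "(\<forall>X\<in>car (quot A \<rho>). P X) \<longleftrightarrow> (\<forall>x\<in>car A. P (\<rho> `` {x}))"
  by (auto simp: quotient_def)

lemma quot_idem:
  assumes "idem_semiring A" and c: "congruence A \<rho>"
  shows "idem_semiring (quot A \<rho>)"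
proof -
  interpret idem_semiring_on "car A" "tm A" "pl A"
    using assms by (simp add: idem_semiring_iff_on)
  show ?thesis
    unfolding idem_semiring_def quot_ball by (simp add: quot_ops[OF c] quotientI)
qed

lemma class_subsemiring:
  assumes "idem_semiring A" and c: "congruence A \<rho>" and C: "C \<in> car A // \<rho>"
  shows "idem_semiring (restr A C)"
proof -
  interpret idem_semiring_on "car A" "tm A" "pl A"
    using assms by (simp add: idem_semiring_iff_on)
  have e: "equiv (car A) \<rho>" using c by (rule congruence_equiv)
  have sub: "C \<subseteq> car A" using in_quotient_imp_subset[OF e C] .
  have closed: "pl A x y \<in> C \<and> tm A x y \<in> C" if "x \<in> C" "y \<in> C" for x y
  proof -
    have "(x, y) \<in> \<rho>" "(y, y) \<in> \<rho>" using in_quotient_imp_in_rel[OF e C] that by blast+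
    then have "(pl A x y, pl A y y) \<in> \<rho>" "(tm A x y, tm A y y) \<in> \<rho>"
      using c by (simp_all add: congruence_def)
    then have "(pl A x y, y) \<in> \<rho>" "(tm A x y, y) \<in> \<rho>" using sub that by auto
    then show ?thesis using e C that by (meson in_quotient_imp_closed symE equivE)
  qed
  have "x \<in> car A" if "x \<in> C" for x using sub that by blast
  with closed show ?thesis unfolding idem_semiring_def restr_def by auto
qed

lemma malcevI:
  assumes "idem_semiring A" "congruence A \<rho>" "W (quot A \<rho>)"
    and "\<And>C. C \<in> car A // \<rho> \<Longrightarrow> V (restr A C)"
  shows "malcev V W A"
  using assms unfolding malcev_def by blast

lemma mult_comm_absorbing_iff_on:
  "mult_comm_absorbing (car A) (tm A) (pl A) \<longleftrightarrow> idem_semiring A \<and>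
     (\<forall>x\<in>car A. \<forall>y\<in>car A. tm A x y = tm A y x \<and> pl A x (tm A x y) = x)"
  by (auto simp: mult_comm_absorbing_def mult_comm_absorbing_axioms_def idem_semiring_iff_on)

lemma mult_comm_absorbing_malcev:
  assumes "mult_comm_absorbing (car A) (tm A) (pl A)"
  shows "malcev LZplus DLat A"
proof -
  interpret mult_comm_absorbing "car A" "tm A" "pl A" by (fact assms)
  have i: "idem_semiring A" using assms by (simp add: mult_comm_absorbing_iff_on)
  have e: "equiv (car A) plus_L" by (rule equiv_plus_L)
  have c: "congruence A plus_L"
    unfolding congruence_def using e plus_L_plus plus_L_mult by blast
  have "DLat (quot A plus_L)"
    unfolding DLat_def quot_ball using e
    by (simp add: quot_idem[OF i c] quot_ops[OF c] mult_comm plus_mult_absorb plus_L_plus_comm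
        equiv_class_eq)
  moreover have "LZplus (restr A K)" if K: "K \<in> car A // plus_L" for K
    using class_subsemiring[OF i c K] in_quotient_imp_in_rel[OF e K]
    by (auto simp: LZplus_def restr_def plus_L_def)
  ultimately show ?thesis using i c by (blast intro: malcevI)
qed

lemma xyx_absorbing_iff_on:
  "xyx_absorbing (car A) (tm A) (pl A) \<longleftrightarrow> idem_semiring A \<and>
     (\<forall>x\<in>car A. \<forall>y\<in>car A. pl A x (tm A (tm A x y) x) = x)"
  by (auto simp: xyx_absorbing_def xyx_absorbing_axioms_def idem_semiring_iff_on)

lemma xyx_absorbing_malcev:
  assumes "xyx_absorbing (car A) (tm A) (pl A)"
  shows "malcev Rect (malcev LZplus DLat) A"
proof -
  interpret xyx_absorbing "car A" "tm A" "pl A" by (fact assms)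
  have i: "idem_semiring A" using assms by (simp add: xyx_absorbing_iff_on)
  have e: "equiv (car A) green_D" by (rule equiv_green_D)
  have c: "congruence A green_D"
    unfolding congruence_def using e green_D_plus green_D_mult by blast
  have "mult_comm_absorbing (car (quot A green_D)) (tm (quot A green_D)) (pl (quot A green_D))"
    unfolding mult_comm_absorbing_iff_on quot_ball using e
    by (simp add: quot_idem[OF i c] quot_ops[OF c] green_D_mult_comm green_D_plus_absorb
        equiv_class_eq)
  then have "malcev LZplus DLat (quot A green_D)" by (rule mult_comm_absorbing_malcev)
  moreover have "Rect (restr A C)" if C: "C \<in> car A // green_D" for C
  proof -
    have "tm A (tm A x y) x = x" if "x \<in> C" "y \<in> C" for x y
    proof -
      have "(x, y) \<in> green_D" using in_quotient_imp_in_rel[OF e C] that by blast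
      then show ?thesis by (simp add: green_D_def below_def)
    qed
    then show ?thesis using class_subsemiring[OF i c C] by (simp add: Rect_def restr_def)
  qed
  ultimately show ?thesis using i c by (blast intro: malcevI)
qed

lemma malcev_LZplus_DLat_absorb:
  assumes "malcev LZplus DLat Q" and X: "X \<in> car Q" "Y \<in> car Q"
  shows "pl Q X (tm Q X Y) = X"
proof -
  obtain \<sigma> where c: "congruence Q \<sigma>" and D: "DLat (quot Q \<sigma>)"
    and L: "\<forall>K \<in> car Q // \<sigma>. LZplus (restr Q K)"
    using assms unfolding malcev_def by blast
  have "idem_semiring Q" using assms unfolding malcev_def by blast
  then interpret idem_semiring_on "car Q" "tm Q" "pl Q" by (simp add: idem_semiring_iff_on)
  have e: "equiv (car Q) \<sigma>" using c by (rule congruence_equiv)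
  define Z where "Z = pl Q X (tm Q X Y)"
  have ZS: "Z \<in> car Q" using X by (simp add: Z_def)
  have "\<forall>U\<in>car (quot Q \<sigma>). \<forall>V\<in>car (quot Q \<sigma>).
      pl (quot Q \<sigma>) U (tm (quot Q \<sigma>) U V) = U"
    using D unfolding DLat_def by blast
  then have "\<sigma> `` {Z} = \<sigma> `` {X}"
    using X unfolding quot_ball by (simp add: Z_def quot_ops[OF c])
  then have "Z \<in> \<sigma> `` {X}" using equiv_class_self[OF e ZS] by simp
  moreover have "X \<in> \<sigma> `` {X}" using equiv_class_self[OF e X(1)] .
  moreover have "LZplus (restr Q (\<sigma> `` {X}))" using L X by (simp add: quotientI)
  ultimately have "pl Q X Z = X" by (simp add: LZplus_def restr_def)
  then show ?thesis using X by (simp add: Z_def)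
qed

lemma malcev_Rect_absorb:
  assumes "malcev Rect W A"
    and W: "\<And>Q. W Q \<Longrightarrow> \<forall>X\<in>car Q. \<forall>Y\<in>car Q. pl Q X (tm Q X Y) = X"
    and x: "x \<in> car A" and y: "y \<in> car A"
  shows "pl A x (tm A (tm A x y) x) = x"
proof -
  obtain \<rho> where c: "congruence A \<rho>" and Q: "W (quot A \<rho>)"
    and R: "\<forall>C \<in> car A // \<rho>. Rect (restr A C)"
    using assms unfolding malcev_def by blast
  have "idem_semiring A" using assms unfolding malcev_def by blast
  then interpret idem_semiring_on "car A" "tm A" "pl A" by (simp add: idem_semiring_iff_on)
  have e: "equiv (car A) \<rho>" using c by (rule congruence_equiv)
  define u where "u = pl A x (tm A x (tm A y x))"
  have uS: "u \<in> car A" using x y by (simp add: u_def)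
  have "\<rho> `` {u} = \<rho> `` {x}"
    using W[OF Q] x y unfolding quot_ball by (simp add: u_def quot_ops[OF c] del: mult_assoc)
  then have "u \<in> \<rho> `` {x}" using equiv_class_self[OF e uS] by simp
  moreover have "x \<in> \<rho> `` {x}" using equiv_class_self[OF e x] .
  moreover have "Rect (restr A (\<rho> `` {x}))" using R x by (simp add: quotientI)
  ultimately have "tm A (tm A x u) x = x" by (simp add: Rect_def restr_def)
  moreover have "tm A (tm A x u) x = u" using x y by (simp add: u_def)
  ultimately show ?thesis using x y by (simp add: u_def)
qed

lemma xyx_absorbing_iff_malcev:
  "xyx_absorbing (car A) (tm A) (pl A) \<longleftrightarrow> malcev Rect (malcev LZplus DLat) A"
proof
  assume "malcev Rect (malcev LZplus DLat) A"
  then show "xyx_absorbing (car A) (tm A) (pl A)"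
    unfolding xyx_absorbing_iff_on
    using malcev_Rect_absorb malcev_LZplus_DLat_absorb by (metis malcev_def)
qed (rule xyx_absorbing_malcev)

section \<open>Reversing the addition\<close>

definition flip :: "'b salg \<Rightarrow> 'b salg" where
  "flip A = \<lparr>car = car A, pl = (\<lambda>x y. pl A y x), tm = tm A\<rparr>"

lemma flip_simps [simp]: "car (flip A) = car A" "pl (flip A) x y = pl A y x" "tm (flip A) = tm A"
  by (simp_all add: flip_def)

lemma flip_flip [simp]: "flip (flip A) = A"
  by (simp add: flip_def)

lemma idem_semiring_flip [simp]: "idem_semiring (flip A) \<longleftrightarrow> idem_semiring A"
proof -
  have "idem_semiring (flip B)" if "idem_semiring B" for B :: "'b salg"
    using idem_semiring_on.plus_reversed_semiring that
    by (simp add: idem_semiring_iff_on flip_def)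
  from this[of A] this[of "flip A"] show ?thesis by auto
qed

lemma congruence_flip [simp]: "congruence (flip A) \<rho> \<longleftrightarrow> congruence A \<rho>"
  unfolding congruence_def by auto

lemma quot_flip [simp]: "quot (flip A) \<rho> = flip (quot A \<rho>)"
  by (simp add: quot_def flip_def)

lemma restr_flip [simp]: "restr (flip A) C = flip (restr A C)"
  by (simp add: restr_def flip_def)

lemma Rect_flip [simp]: "Rect (flip A) \<longleftrightarrow> Rect A"
  by (simp add: Rect_def)

lemma LZplus_flip [simp]: "LZplus (flip A) \<longleftrightarrow> RZplus A"
  by (auto simp: LZplus_def RZplus_def)

lemma DLat_flip [simp]: "DLat (flip A) \<longleftrightarrow> DLat A"
proof -
  have "DLat (flip B)" if D: "DLat B" for B :: "'b salg"
  proof -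
    have "idem_semiring B" using D by (simp add: DLat_def)
    then interpret idem_semiring_on "car B" "tm B" "pl B" by (simp add: idem_semiring_iff_on)
    have "pl B (tm B x y) x = x" if "x \<in> car B" "y \<in> car B" for x y
      using D that by (simp add: DLat_def)
    then show ?thesis using D by (simp add: DLat_def)
  qed
  from this[of A] this[of "flip A"] show ?thesis by auto
qed

lemma malcev_flip:
  "malcev V W (flip A) \<longleftrightarrow> malcev (\<lambda>B. V (flip B)) (\<lambda>B. W (flip B)) A"
  unfolding malcev_def by simp

theorem theorem4p3:
  fixes A :: "'a salg"
  shows "((idem_semiring A \<and>
            (\<forall>x\<in>car A. \<forall>y\<in>car A. pl A x (tm A (tm A x y) x) = x))
          \<longleftrightarrow> malcev Rect (malcev LZplus DLat) A)
       \<and> ((idem_semiring A \<and>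
            (\<forall>x\<in>car A. \<forall>y\<in>car A. pl A (tm A (tm A x y) x) x = x))
          \<longleftrightarrow> malcev Rect (malcev RZplus DLat) A)"
proof
  show "(idem_semiring A \<and> (\<forall>x\<in>car A. \<forall>y\<in>car A. pl A x (tm A (tm A x y) x) = x))
      \<longleftrightarrow> malcev Rect (malcev LZplus DLat) A"
    by (simp only: xyx_absorbing_iff_on[symmetric] xyx_absorbing_iff_malcev)
  have "malcev Rect (malcev LZplus DLat) (flip A) \<longleftrightarrow> malcev Rect (malcev RZplus DLat) A"
    by (simp add: malcev_flip)
  then show "(idem_semiring A \<and> (\<forall>x\<in>car A. \<forall>y\<in>car A. pl A (tm A (tm A x y) x) x = x))
      \<longleftrightarrow> malcev Rect (malcev RZplus DLat) A"
    using xyx_absorbing_iff_malcev[of "flip A"] xyx_absorbing_iff_on[of "flip A"] by simp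
qed

end
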